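(* Let $n>2$ be even, let $G$ be a group of order $2n$ containing a cyclic subgroup $H$ of index $2$, let $j$ be the unique involution of $H$, and let $\{h_1,\dots,h_{n/2}\}$ be a set of representatives of the cosets of $\{1,j\}$ in $H$. Let $\Sigma=\{S_1,\dots,S_r\}$ be a starter in $G$ with associated subgroups $H_1,\dots,H_r$ such that $S_1=\{e\}$ with $\partial e=\{j\}$, and let $\mathcal F$ be the associated $G$-regular $1$-factorization, with fixed $1$-factor $F_1=Orb_G(e)$ and, for $i\ge2$, the $1$-factors $F_i^1,\dots,F_i^{t_i}$ forming the $G$-orbit of $F_i=\bigcup_{f\in S_i}Orb_{H_i}(f)$, where $t_i=[G:H_i]$. Let $R=R_2\cup\dots\cup R_r$ be a subgraph of $K_{2n}$ such that: (1) for each $i\in\{2,\dots,r\}$, $R_i$ consists of $t_i$ edges, one in each of the $1$-factors $F_i^1,\dots,F_i^{t_i}$, and the set of distinct elements of $\partial R_i$ equals $\partial S_i$; (2) if $l$ is a long edge of $R_i$ ($2\le i\le r$), there is exactly one edge $l'\in R_i$ with $\partial l=\partial l'$ and $l'\notin Orb_H(l)$; if $l$ is a short edge of $R_i$, it is the unique edge of $R_i$ with difference set $\partial l$; (3) there exist two distinct edges $e_1,e_2$ of $F_1$ with $Orb_H(e_1)\cap Orb_H(e_2)=\emptyset$ such that both $R\cup\{e_1\}$ and $R\cup\{e_2\}$ are spanning connected subgraphs of $K_{2n}$. Put $T_1=R\cup\{e_1\}$ and $T_2=Rj\cup\{e_2\}$. Then $\mathcal T=\{T_1h_1,\dots,T_1h_{n/2}\}\cup\{T_2h_1,\dots,T_2h_{n/2}\}$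 is a complete set of rainbow spanning trees for $\mathcal F$.
   Context: Vertices of $K_{2n}$ are the elements of $G$; $G$ acts by right multiplication: $[x,y]\cdot g=[xg,yg]$, and for a set $U$ of edges $Ug=\{[xg,yg]:[x,y]\in U\}$. $Orb_K(f)$ denotes the orbit of an edge $f$ under a subgroup $K$. An edge $[x,y]$ is long if its $G$-orbit has length $2n$ and short if it has length $n$ (equivalently $x^{-1}y$ is an involution; this involution is the one associated with the short edge). Define $\partial([x,y])=\{xy^{-1},yx^{-1}\}$ if the edge is long and $\{xy^{-1}\}$ if short; $\phi([x,y])=\{x,y\}$ if long and $\{x\}$ if short; for a set $S$ of edges $\partial S,\phi(S)$ are the (multiset) unions. A starter in $G$ is a family $\{S_1,\dots,S_k\}$ of sets of edges with subgroups $H_1,\dots,H_k$ such that (i) $\partial S_1\cup\dots\cup\partial S_k=G\setminus\{1\}$ (as a set, without repetition); (ii) each $\phi(S_i)$ is a left transversal of $H_i$ in $G$; (iii) each $H_i$ contains the involutions associated with the short edges of $S_i$. The associated $G$-regular $1$-factorization consists of the $G$-orbits of the $1$-factors $F_i=\bigcup_{f\in S_i}Orb_{H_i}(f)$. A $1$-factorization is $G$-regular if $G$ (acting sharply transitively on vertices) permutes its $1$-factors. A rainbow spanning tree is a spanning tree with exactly one edge in each $1$-factor; a complete set of rainbow spanning trees is a set of such trees partitioning the edge set. *)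

theory Defs
  imports "HOL-Algebra.Algebra" "HOL-Library.Multiset"
begin

definition Kedges :: "('a, 'b) monoid_scheme \<Rightarrow> 'a set set" where
  "Kedges G = {e. e \<subseteq> carrier G \<and> card e = 2}"

definition edge_act :: "('a, 'b) monoid_scheme \<Rightarrow> 'a set \<Rightarrow> 'a \<Rightarrow> 'a set" where
  "edge_act G f g = (\<lambda>x. x \<otimes>\<^bsub>G\<^esub> g) ` f"

definition edges_act :: "('a, 'b) monoid_scheme \<Rightarrow> 'a set set \<Rightarrow> 'a \<Rightarrow> 'a set set" where
  "edges_act G U g = (\<lambda>f. edge_act G f g) ` U"

definition Orb :: "('a, 'b) monoid_scheme \<Rightarrow> 'a set \<Rightarrow> 'a set \<Rightarrow> 'a set set" where
  "Orb G K f = (\<lambda>g. edge_act G f g) ` K"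

definition long_edge :: "('a, 'b) monoid_scheme \<Rightarrow> 'a set \<Rightarrow> bool" where
  "long_edge G f \<longleftrightarrow> card (Orb G (carrier G) f) = order G"

definition short_edge :: "('a, 'b) monoid_scheme \<Rightarrow> 'a set \<Rightarrow> bool" where
  "short_edge G f \<longleftrightarrow> 2 * card (Orb G (carrier G) f) = order G"

text \<open>The differences x y^{-1} of an edge [x,y]: the set {x y^{-1}, y x^{-1}}
  (which collapses to the single element {x y^{-1}} exactly for short edges).\<close>
definition diffs :: "('a, 'b) monoid_scheme \<Rightarrow> 'a set \<Rightarrow> 'a set" where
  "diffs G f = {x \<otimes>\<^bsub>G\<^esub> inv\<^bsub>G\<^esub> y | x y. x \<in> f \<and> y \<in> f \<and> x \<noteq> y}"

definition dS :: "('a, 'b) monoid_scheme \<Rightarrow> 'a set set \<Rightarrow> 'a multiset" where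
  "dS G S = (\<Sum>f\<in>S. mset_set (diffs G f))"

definition phi :: "('a, 'b) monoid_scheme \<Rightarrow> 'a set \<Rightarrow> 'a multiset" where
  "phi G f = (if long_edge G f then mset_set f else {# SOME x. x \<in> f #})"

definition phiS :: "('a, 'b) monoid_scheme \<Rightarrow> 'a set set \<Rightarrow> 'a multiset" where
  "phiS G S = (\<Sum>f\<in>S. phi G f)"

definition left_transversal :: "('a, 'b) monoid_scheme \<Rightarrow> 'a set \<Rightarrow> 'a multiset \<Rightarrow> bool" where
  "left_transversal G H T \<longleftrightarrow> set_mset T \<subseteq> carrier G \<and>
     (\<forall>x\<in>carrier G. size (filter_mset (\<lambda>y. y \<in> x <#\<^bsub>G\<^esub> H) T) = 1)"

definition starter :: "('a, 'b) monoid_scheme \<Rightarrow> nat \<Rightarrow> (nat \<Rightarrow> 'a set set) \<Rightarrow> (nat \<Rightarrow> 'a set) \<Rightarrow> bool" where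
  "starter G r S Hs \<longleftrightarrow>
     (\<forall>i\<in>{1..r}. S i \<subseteq> Kedges G \<and> subgroup (Hs i) G) \<and>
     (\<Sum>i\<in>{1..r}. dS G (S i)) = mset_set (carrier G - {\<one>\<^bsub>G\<^esub>}) \<and>
     (\<forall>i\<in>{1..r}. left_transversal G (Hs i) (phiS G (S i))) \<and>
     (\<forall>i\<in>{1..r}. \<forall>f\<in>S i. short_edge G f \<longrightarrow>
         (\<forall>x\<in>f. \<forall>y\<in>f. x \<noteq> y \<longrightarrow> inv\<^bsub>G\<^esub> x \<otimes>\<^bsub>G\<^esub> y \<in> Hs i))"

definition base_factor :: "('a, 'b) monoid_scheme \<Rightarrow> (nat \<Rightarrow> 'a set set) \<Rightarrow> (nat \<Rightarrow> 'a set) \<Rightarrow> nat \<Rightarrow> 'a set set" where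
  "base_factor G S Hs i = (\<Union>f\<in>S i. Orb G (Hs i) f)"

definition factor_orbit :: "('a, 'b) monoid_scheme \<Rightarrow> (nat \<Rightarrow> 'a set set) \<Rightarrow> (nat \<Rightarrow> 'a set) \<Rightarrow> nat \<Rightarrow> 'a set set set" where
  "factor_orbit G S Hs i = (\<lambda>g. edges_act G (base_factor G S Hs i) g) ` carrier G"

definition assoc_factorization :: "('a, 'b) monoid_scheme \<Rightarrow> nat \<Rightarrow> (nat \<Rightarrow> 'a set set) \<Rightarrow> (nat \<Rightarrow> 'a set) \<Rightarrow> 'a set set set" where
  "assoc_factorization G r S Hs = (\<Union>i\<in>{1..r}. factor_orbit G S Hs i)"

definition adj_rel :: "'a set set \<Rightarrow> ('a \<times> 'a) set" where
  "adj_rel T = {(x, y). {x, y} \<in> T \<and> x \<noteq> y}"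

definition spanning_connected :: "('a, 'b) monoid_scheme \<Rightarrow> 'a set set \<Rightarrow> bool" where
  "spanning_connected G T \<longleftrightarrow> T \<subseteq> Kedges G \<and>
     (\<forall>x\<in>carrier G. \<forall>y\<in>carrier G. (x, y) \<in> (adj_rel T)\<^sup>*)"

definition has_cycle :: "'a set set \<Rightarrow> bool" where
  "has_cycle T \<longleftrightarrow> (\<exists>vs. length vs \<ge> 3 \<and> distinct vs \<and>
     (\<forall>i < length vs - 1. {vs ! i, vs ! (i + 1)} \<in> T) \<and> {last vs, hd vs} \<in> T)"

definition spanning_tree :: "('a, 'b) monoid_scheme \<Rightarrow> 'a set set \<Rightarrow> bool" where
  "spanning_tree G T \<longleftrightarrow> spanning_connected G T \<and> \<not> has_cycle T"

definition rainbow_spanning_tree :: "('a, 'b) monoid_scheme \<Rightarrow> 'a set set set \<Rightarrow> 'a set set \<Rightarrow> bool" where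
  "rainbow_spanning_tree G FF T \<longleftrightarrow> spanning_tree G T \<and> (\<forall>F\<in>FF. card (T \<inter> F) = 1)"

definition complete_rainbow_set :: "('a, 'b) monoid_scheme \<Rightarrow> 'a set set set \<Rightarrow> 'a set set set \<Rightarrow> bool" where
  "complete_rainbow_set G FF TT \<longleftrightarrow>
     (\<forall>T\<in>TT. rainbow_spanning_tree G FF T) \<and>
     (\<Union>TT) = Kedges G \<and>
     (\<forall>T1\<in>TT. \<forall>T2\<in>TT. T1 \<noteq> T2 \<longrightarrow> T1 \<inter> T2 = {})"

end

theory Submission
  imports Defs
begin

(* The edges of R have differences outside {j} = de, and R_i meets each 1-factor of the G-orbit
   of F_i exactly once; so R + e_1, R + e_2 and all their translates are rainbow spanning
   connected subgraphs.  Counting |R_i| = |dS_i| = [G : H_i] shows that no two edges of R_i lie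
   in a common H-orbit and that no edge of R is fixed by a non-trivial element of H, while e_1
   and e_2 lie in different H-orbits and are fixed exactly by 1 and the central involution j.
   Hence the n translates of R + e_1 by the h_k and of R + e_2 by the j h_k (these are the
   T_1 h_k and T_2 h_k) are pairwise edge-disjoint.  Each has at least 2n - 1 edges, while K_2n
   has only n (2n - 1): so each is a spanning tree and together they partition the edges. *)

section \<open>Right translation of edges\<close>

context group begin

lemma Kedges_iff:
  "f \<in> Kedges G \<longleftrightarrow> (\<exists>x y. x \<in> carrier G \<and> y \<in> carrier G \<and> x \<noteq> y \<and> f = {x, y})"
  unfolding Kedges_def by (auto simp: card_2_iff)

lemma edge_act_pair: "edge_act G {x, y} g = {x \<otimes> g, y \<otimes> g}"
  unfolding edge_act_def by auto

lemma edge_act_mult: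
  "f \<subseteq> carrier G \<Longrightarrow> g \<in> carrier G \<Longrightarrow> g' \<in> carrier G \<Longrightarrow>
   edge_act G (edge_act G f g) g' = edge_act G f (g \<otimes> g')"
  unfolding edge_act_def image_image by (intro image_cong) (auto simp: m_assoc)

lemma edge_act_one: "f \<subseteq> carrier G \<Longrightarrow> edge_act G f \<one> = f"
  unfolding edge_act_def by (auto simp: subset_iff)

lemma edge_act_closed:
  assumes "f \<in> Kedges G" and g: "g \<in> carrier G"
  shows "edge_act G f g \<in> Kedges G"
proof -
  obtain x y where "x \<in> carrier G" "y \<in> carrier G" "x \<noteq> y" "f = {x, y}"
    using assms(1) unfolding Kedges_iff by auto
  moreover from this g have "x \<otimes> g \<noteq> y \<otimes> g" by simp
  ultimately show ?thesis
    using g unfolding Kedges_iff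
    by (intro exI[of _ "x \<otimes> g"] exI[of _ "y \<otimes> g"]) (simp add: edge_act_pair)
qed

lemma inj_on_edge_act: "g \<in> carrier G \<Longrightarrow> inj_on (\<lambda>f. edge_act G f g) (Kedges G)"
  unfolding inj_on_def Kedges_def
  by (metis (no_types, lifting) mem_Collect_eq edge_act_mult edge_act_one r_inv inv_closed)

lemma diffs_pair:
  "x \<in> carrier G \<Longrightarrow> y \<in> carrier G \<Longrightarrow> x \<noteq> y \<Longrightarrow> diffs G {x, y} = {x \<otimes> inv y, y \<otimes> inv x}"
  unfolding diffs_def by auto

lemma diffs_edge_act:
  assumes "f \<in> Kedges G" and g: "g \<in> carrier G"
  shows "diffs G (edge_act G f g) = diffs G f"
proof -
  obtain x y where xy: "x \<in> carrier G" "y \<in> carrier G" "x \<noteq> y" "f = {x, y}"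
    using assms(1) unfolding Kedges_iff by auto
  have cancel: "(u \<otimes> g) \<otimes> inv (v \<otimes> g) = u \<otimes> inv v" if "u \<in> carrier G" "v \<in> carrier G" for u v
    using that g by (simp add: inv_mult_group m_assoc[symmetric]) (simp add: m_assoc)
  have "x \<otimes> g \<noteq> y \<otimes> g" using xy g by simp
  with xy g show ?thesis by (simp add: edge_act_pair diffs_pair cancel)
qed

lemma diffs_nonempty: "f \<in> Kedges G \<Longrightarrow> diffs G f \<noteq> {}"
  unfolding Kedges_iff by (auto simp: diffs_pair)

lemma finite_diffs: "f \<in> Kedges G \<Longrightarrow> finite (diffs G f)"
  unfolding Kedges_iff by (auto simp: diffs_pair)

lemma Kedges_eq_by_diff:
  assumes f: "f \<in> Kedges G" and d: "d \<in> diffs G f"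
  shows "\<exists>y\<in>carrier G. f = {d \<otimes> y, y}"
proof -
  obtain x y where xy: "x \<in> carrier G" "y \<in> carrier G" "x \<noteq> y" "f = {x, y}"
    using f unfolding Kedges_iff by auto
  then have "d = x \<otimes> inv y \<or> d = y \<otimes> inv x" using d by (simp add: diffs_pair)
  then show ?thesis
  proof
    assume "d = x \<otimes> inv y"
    then have "f = {d \<otimes> y, y}" using xy by (simp add: m_assoc)
    then show ?thesis using xy by blast
  next
    assume "d = y \<otimes> inv x"
    then have "f = {d \<otimes> x, x}" using xy by (simp add: m_assoc insert_commute)
    then show ?thesis using xy by blast
  qed
qed

lemma edges_act_mult:
  "T \<subseteq> Kedges G \<Longrightarrow> g \<in> carrier G \<Longrightarrow> g' \<in> carrier G \<Longrightarrow>
   edges_act G (edges_act G T g) g' = edges_act G T (g \<otimes> g')"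
  unfolding edges_act_def image_image Kedges_def by (intro image_cong) (auto simp: edge_act_mult)

lemma edges_act_closed: "T \<subseteq> Kedges G \<Longrightarrow> g \<in> carrier G \<Longrightarrow> edges_act G T g \<subseteq> Kedges G"
  unfolding edges_act_def using edge_act_closed by auto

lemma card_edges_act: "T \<subseteq> Kedges G \<Longrightarrow> g \<in> carrier G \<Longrightarrow> card (edges_act G T g) = card T"
  unfolding edges_act_def by (rule card_image[OF inj_on_subset[OF inj_on_edge_act]])

lemma edges_act_Int:
  "A \<subseteq> Kedges G \<Longrightarrow> B \<subseteq> Kedges G \<Longrightarrow> g \<in> carrier G \<Longrightarrow>
   edges_act G (A \<inter> B) g = edges_act G A g \<inter> edges_act G B g"
  unfolding edges_act_def by (rule inj_on_image_Int[OF inj_on_edge_act]) auto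

lemma Orb_carrier_edges_act:
  assumes f: "f \<subseteq> carrier G" and g: "g \<in> carrier G"
  shows "edges_act G (Orb G (carrier G) f) g = Orb G (carrier G) f"
proof -
  have "edges_act G (Orb G (carrier G) f) g = (\<lambda>h. edge_act G f h) ` ((\<lambda>h. h \<otimes> g) ` carrier G)"
    unfolding edges_act_def Orb_def image_image using f g
    by (intro image_cong) (auto simp: edge_act_mult)
  also have "(\<lambda>h. h \<otimes> g) ` carrier G = carrier G"
  proof (intro equalityI subsetI)
    fix x assume "x \<in> carrier G"
    with g have "x = (x \<otimes> inv g) \<otimes> g" "x \<otimes> inv g \<in> carrier G" by (simp_all add: m_assoc)
    then show "x \<in> (\<lambda>h. h \<otimes> g) ` carrier G" by blast
  qed (use g in auto)
  finally show ?thesis unfolding Orb_def .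
qed

lemma rtrancl_adj_rel_edges_act:
  assumes T: "T \<subseteq> Kedges G" and g: "g \<in> carrier G" and ab: "(a, b) \<in> (adj_rel T)\<^sup>*"
  shows "(a \<otimes> g, b \<otimes> g) \<in> (adj_rel (edges_act G T g))\<^sup>*"
  using ab
proof (induction rule: rtrancl_induct)
  case (step y z)
  then have "{y, z} \<in> T" "y \<noteq> z" unfolding adj_rel_def by auto
  moreover from this have "y \<in> carrier G" "z \<in> carrier G" using T unfolding Kedges_def by auto
  ultimately have "(y \<otimes> g, z \<otimes> g) \<in> adj_rel (edges_act G T g)"
    using g unfolding adj_rel_def edges_act_def by (force simp: edge_act_pair)
  with step.IH show ?case by (rule rtrancl_into_rtrancl)
qed simp

lemma spanning_connected_edges_act:
  assumes sc: "spanning_connected G T" and g: "g \<in> carrier G"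
  shows "spanning_connected G (edges_act G T g)"
  unfolding spanning_connected_def
proof (intro conjI ballI)
  have T: "T \<subseteq> Kedges G" using sc unfolding spanning_connected_def by simp
  then show "edges_act G T g \<subseteq> Kedges G" using g by (rule edges_act_closed)
  fix x y assume "x \<in> carrier G" "y \<in> carrier G"
  with sc g have "(x \<otimes> inv g, y \<otimes> inv g) \<in> (adj_rel T)\<^sup>*"
    unfolding spanning_connected_def by simp
  from rtrancl_adj_rel_edges_act[OF T g this] \<open>x \<in> carrier G\<close> \<open>y \<in> carrier G\<close> g
  show "(x, y) \<in> (adj_rel (edges_act G T g))\<^sup>*" by (simp add: m_assoc)
qed

end

section \<open>Long and short edges\<close>

context group begin

lemma swapped_edge_diffs_eq:
  assumes c: "x \<in> carrier G" "y \<in> carrier G" "g \<in> carrier G" "g' \<in> carrier G"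
    and e1: "x \<otimes> g = y \<otimes> g'" and e2: "y \<otimes> g = x \<otimes> g'"
  shows "x \<otimes> inv y = y \<otimes> inv x"
proof -
  have g': "g' = inv y \<otimes> x \<otimes> g" using e1 c by (simp add: m_assoc inv_solve_left)
  have "y \<otimes> g = (x \<otimes> inv y \<otimes> x) \<otimes> g" using e2 c by (simp add: g' m_assoc)
  then have "y = x \<otimes> inv y \<otimes> x" using c by simp
  then have "y \<otimes> inv x = (x \<otimes> inv y \<otimes> x) \<otimes> inv x" by simp
  also have "\<dots> = x \<otimes> inv y" using c by (simp add: m_assoc)
  finally show ?thesis by simp
qed

text \<open>An edge \<open>{x, y}\<close> has trivial stabiliser unless \<open>x y\<inverse> = y x\<inverse>\<close>, in which case
  its stabiliser is the subgroup \<open>{1, x\<inverse> y}\<close> of order two.\<close>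
lemma edge_orbit_card_cases:
  assumes fin: "finite (carrier G)" and f: "f \<in> Kedges G"
  shows "card (diffs G f) = 2 \<and> card (Orb G (carrier G) f) = order G \<or>
         card (diffs G f) = 1 \<and> 2 * card (Orb G (carrier G) f) = order G"
proof -
  obtain x y where xy: "x \<in> carrier G" "y \<in> carrier G" "x \<noteq> y" "f = {x, y}"
    using f unfolding Kedges_iff by auto
  have orb: "Orb G (carrier G) f = (\<lambda>g. edge_act G f g) ` carrier G"
    unfolding Orb_def ..
  show ?thesis
  proof (cases "x \<otimes> inv y = y \<otimes> inv x")
    case False
    have "inj_on (\<lambda>g. edge_act G f g) (carrier G)"
    proof (rule inj_onI)
      fix g g' assume g: "g \<in> carrier G" "g' \<in> carrier G" and "edge_act G f g = edge_act G f g'"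
      then have "{x \<otimes> g, y \<otimes> g} = {x \<otimes> g', y \<otimes> g'}" using xy by (simp add: edge_act_pair)
      then have "x \<otimes> g = x \<otimes> g' \<or> (x \<otimes> g = y \<otimes> g' \<and> y \<otimes> g = x \<otimes> g')"
        by (auto simp: doubleton_eq_iff)
      then show "g = g'" using swapped_edge_diffs_eq[OF xy(1,2) g] False xy g by auto
    qed
    then have "card (Orb G (carrier G) f) = order G" unfolding orb order_def by (rule card_image)
    moreover have "card (diffs G f) = 2" using False xy by (simp add: diffs_pair)
    ultimately show ?thesis by simp
  next
    case True
    define s where "s = inv x \<otimes> y"
    have s: "s \<in> carrier G" and xs: "x \<otimes> s = y" using xy by (simp_all add: s_def m_assoc[symmetric])
    have s1: "s \<noteq> \<one>" using xs xy by auto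
    have ss: "s \<otimes> s = \<one>"
    proof -
      have "s \<otimes> s = inv x \<otimes> (y \<otimes> inv x) \<otimes> y" using xy by (simp add: s_def m_assoc)
      also have "\<dots> = inv x \<otimes> (x \<otimes> inv y) \<otimes> y" using True by simp
      also have "\<dots> = \<one>" using xy by (simp add: m_assoc[symmetric])
      finally show ?thesis .
    qed
    have "inv s = s" using ss s by (simp add: inv_equality)
    define K where "K = {\<one>, s}"
    have K: "subgroup K G"
      by (rule subgroupI) (use s \<open>inv s = s\<close> ss in \<open>auto simp: K_def\<close>)
    have "edge_act G f g = x <# (K #> g)" if g: "g \<in> carrier G" for g
    proof -
      have "x <# (K #> g) = {x \<otimes> g, x \<otimes> (s \<otimes> g)}"
        using g by (auto simp: K_def r_coset_def l_coset_def)
      also have "x \<otimes> (s \<otimes> g) = y \<otimes> g" using xs xy s g by (simp add: m_assoc[symmetric])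
      finally show ?thesis using xy by (simp add: edge_act_pair)
    qed
    then have orb_K: "Orb G (carrier G) f = (\<lambda>C. x <# C) ` (rcosets K)"
      unfolding orb RCOSETS_def by auto
    have "inj_on (\<lambda>C. x <# C) (rcosets K)"
    proof (rule inj_onI)
      fix C C' assume C: "C \<in> rcosets K" "C' \<in> rcosets K" and eq: "x <# C = x <# C'"
      have "C \<subseteq> carrier G" "C' \<subseteq> carrier G"
        using C subgroup.rcosets_carrier[OF K is_group] by auto
      moreover have "inv x <# (x <# C) = inv x <# (x <# C')" using eq by simp
      ultimately show "C = C'" using xy by (simp add: lcos_m_assoc lcos_mult_one)
    qed
    then have "card (Orb G (carrier G) f) = card (rcosets K)" unfolding orb_K by (rule card_image)
    moreover have "card (rcosets K) * card K = order G" by (rule lagrange[OF K])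
    moreover have "card K = 2" using s1 by (simp add: K_def)
    moreover have "card (diffs G f) = 1" using True xy by (simp add: diffs_pair)
    ultimately show ?thesis by simp
  qed
qed

lemma
  assumes fin: "finite (carrier G)" and f: "f \<in> Kedges G"
  shows long_edge_iff_card_diffs: "long_edge G f \<longleftrightarrow> card (diffs G f) = 2"
    and short_edge_iff_card_diffs: "short_edge G f \<longleftrightarrow> card (diffs G f) = 1"
proof -
  have "order G > 0" using fin order_gt_0_iff_finite by blast
  then show "long_edge G f \<longleftrightarrow> card (diffs G f) = 2" "short_edge G f \<longleftrightarrow> card (diffs G f) = 1"
    using edge_orbit_card_cases[OF fin f] unfolding long_edge_def short_edge_def by auto
qed

lemma long_or_short_edge: "finite (carrier G) \<Longrightarrow> f \<in> Kedges G \<Longrightarrow> long_edge G f \<or> short_edge G f"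
  using edge_orbit_card_cases long_edge_iff_card_diffs short_edge_iff_card_diffs by blast

lemma size_phi:
  assumes fin: "finite (carrier G)" and f: "f \<in> Kedges G"
  shows "size (phi G f) = card (diffs G f)"
proof -
  have "card f = 2" using f unfolding Kedges_def by auto
  moreover have "card (diffs G f) = 2 \<or> card (diffs G f) = 1"
    using edge_orbit_card_cases[OF fin f] by auto
  ultimately show ?thesis using long_edge_iff_card_diffs[OF fin f] unfolding phi_def by auto
qed

end

context group begin

lemma card_lcosets_eq_card_rcosets:
  assumes "finite (carrier G)" and "subgroup H G"
  shows "card (lcosets H) = card (rcosets H)"
proof -
  have "finite H" using finite_subset[OF subgroup.subset[OF assms(2)] assms(1)] .
  moreover have "H \<noteq> {}" using subgroup.one_closed[OF assms(2)] by blast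
  ultimately have "card H > 0" by (simp add: card_gt_0_iff)
  with l_lagrange[OF assms] lagrange[OF assms(2)] show ?thesis by (metis mult_right_cancel not_gr0)
qed

lemma size_left_transversal:
  assumes fin: "finite (carrier G)" and H: "subgroup H G" and T: "left_transversal G H T"
  shows "size T = card (rcosets H)"
proof -
  have S: "set_mset T \<subseteq> carrier G" using T unfolding left_transversal_def by auto
  have "size T = sum (count T) (set_mset T)" by (rule size_multiset_overloaded_eq)
  also have "\<dots> = (\<Sum>C\<in>lcosets H. sum (count T) {y \<in> set_mset T. y <# H = C})"
    by (rule sum.group[symmetric]) (use fin S in \<open>auto simp: LCOSETS_def\<close>)
  also have "\<dots> = (\<Sum>C\<in>lcosets H. 1)"
  proof (rule sum.cong[OF refl])
    fix C assume "C \<in> lcosets H"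
    then obtain x where x: "x \<in> carrier G" "C = x <# H" unfolding LCOSETS_def by auto
    have C_iff: "y <# H = C \<longleftrightarrow> y \<in> x <# H" if y: "y \<in> carrier G" for y
    proof
      show "y <# H = C \<Longrightarrow> y \<in> x <# H" using lcos_self[OF y H] x by simp
      show "y \<in> x <# H \<Longrightarrow> y <# H = C" using l_repr_independence[OF _ x(1) H] x by simp
    qed
    define Tx where "Tx = filter_mset (\<lambda>y. y \<in> x <# H) T"
    have "{y \<in> set_mset T. y <# H = C} = set_mset Tx"
      unfolding Tx_def using S C_iff by auto
    then have "sum (count T) {y \<in> set_mset T. y <# H = C} = sum (count Tx) (set_mset Tx)"
      unfolding Tx_def by (intro sum.cong) auto
    also have "\<dots> = size Tx" by (rule size_multiset_overloaded_eq[symmetric])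
    also have "\<dots> = 1" using T x unfolding left_transversal_def Tx_def by auto
    finally show "sum (count T) {y \<in> set_mset T. y <# H = C} = 1" .
  qed
  also have "\<dots> = card (rcosets H)" using card_lcosets_eq_card_rcosets[OF fin H] by simp
  finally show ?thesis .
qed

lemma index_two_normal:
  assumes H: "subgroup H G" and idx: "card (rcosets H) = 2"
  shows "H \<lhd> G"
  unfolding normal_inv_iff
proof (intro conjI H ballI)
  fix g h assume g: "g \<in> carrier G" and h: "h \<in> H"
  have Hc: "H \<subseteq> carrier G" using H by (rule subgroup.subset)
  have hc: "h \<in> carrier G" using h Hc by blast
  show "g \<otimes> h \<otimes> inv g \<in> H"
  proof (cases "inv g \<in> H")
    case True
    then have "g \<in> H" using H by (metis g inv_inv subgroup.m_inv_closed)
    with True h H show ?thesis by (simp add: subgroup.m_closed)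
  next
    case False
    define z where "z = g \<otimes> h \<otimes> inv g"
    have zc: "z \<in> carrier G" using g hc by (simp add: z_def)
    have ne: "H #> x \<noteq> H" if "x \<in> carrier G" "x \<notin> H" for x
      using rcos_self[OF that(1) H] that(2) by auto
    obtain A B where AB: "rcosets H = {A, B}" "A \<noteq> B"
      using idx unfolding card_2_iff by blast
    have in_rcosets: "H \<in> rcosets H" "H #> inv g \<in> rcosets H" "H #> z \<in> rcosets H"
      using subgroup.subgroup_in_rcosets[OF H is_group] g zc Hc by (auto intro: rcosetsI)
    show ?thesis
    proof (rule ccontr)
      assume "\<not> ?thesis"
      then have "H #> z = H #> inv g"
        using in_rcosets ne[of z] ne[of "inv g"] False zc g AB unfolding z_def by auto
      then have "z \<in> H #> inv g" using rcos_self[OF zc H] by simp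
      then have "z \<otimes> inv (inv g) \<in> H" using subgroup.rcos_module_imp[OF H is_group, of "inv g" z] g
        by simp
      then have "g \<otimes> h \<in> H" using g hc by (simp add: z_def m_assoc)
      then have "inv h \<otimes> inv g \<in> H" using H g hc by (metis inv_mult_group subgroup.m_inv_closed)
      then have "h \<otimes> (inv h \<otimes> inv g) \<in> H" using H h by (simp add: subgroup.m_closed)
      then show False using False g hc by (simp add: m_assoc[symmetric])
    qed
  qed
qed

lemma unique_involution_central:
  assumes N: "N \<lhd> G" and j: "j \<in> N" "j \<noteq> \<one>" "j \<otimes> j = \<one>"
    and unique: "\<forall>x\<in>N. x \<noteq> \<one> \<and> x \<otimes> x = \<one> \<longrightarrow> x = j"
    and g: "g \<in> carrier G"
  shows "j \<otimes> g = g \<otimes> j"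
proof -
  have jc: "j \<in> carrier G" using j(1) N normal_imp_subgroup subgroup.subset by blast
  define z where "z = inv g \<otimes> j \<otimes> g"
  have "z \<in> N" unfolding z_def using normal.inv_op_closed1[OF N g j(1)] .
  moreover have "z \<otimes> z = \<one>"
    using g jc j(3) by (simp add: z_def m_assoc) (simp add: m_assoc[symmetric])
  moreover have "z \<noteq> \<one>"
    using g jc j(2) by (auto simp: z_def m_assoc inv_solve_left')
  ultimately have "inv g \<otimes> j \<otimes> g = j" using unique unfolding z_def by blast
  then show ?thesis using g jc by (metis inv_solve_left' m_assoc m_closed inv_closed)
qed

end

section \<open>Spanning trees by counting edges\<close>

lemma finite_Kedges: "finite (carrier G) \<Longrightarrow> finite (Kedges G)"
  unfolding Kedges_def by (rule finite_subset[of _ "Pow (carrier G)"]) auto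

lemma card_Kedges: "finite (carrier G) \<Longrightarrow> card (Kedges G) = card (carrier G) choose 2"
  unfolding Kedges_def by (rule n_subsets)

lemma adj_rel_sym: "(a, b) \<in> adj_rel T \<Longrightarrow> (b, a) \<in> adj_rel T"
  unfolding adj_rel_def by (auto simp: insert_commute)

lemma rtrancl_adj_rel_sym: "(a, b) \<in> (adj_rel T)\<^sup>* \<Longrightarrow> (b, a) \<in> (adj_rel T)\<^sup>*"
proof -
  have "(adj_rel T)\<inverse> = adj_rel T" using adj_rel_sym by auto
  moreover assume "(a, b) \<in> (adj_rel T)\<^sup>*"
  ultimately show ?thesis by (metis converseI rtrancl_converseD)
qed

text \<open>Distances from a root \<open>r\<close> give every other vertex \<open>v\<close> a parent one step closer to \<open>r\<close>;
  the edges \<open>{parent v, v}\<close> are pairwise distinct.\<close>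
lemma card_carrier_le_if_spanning_connected:
  assumes fin: "finite (carrier G)" and sc: "spanning_connected G T"
  shows "card (carrier G) \<le> card T + 1"
proof (cases "carrier G = {}")
  case False
  then obtain r where r: "r \<in> carrier G" by blast
  let ?R = "adj_rel T"
  have T: "T \<subseteq> Kedges G" and conn: "\<forall>x\<in>carrier G. \<forall>y\<in>carrier G. (x, y) \<in> ?R\<^sup>*"
    using sc unfolding spanning_connected_def by auto
  define dist where "dist v = (LEAST k. (r, v) \<in> ?R ^^ k)" for v
  have dist: "(r, v) \<in> ?R ^^ dist v" if "v \<in> carrier G" for v
  proof -
    have "\<exists>k. (r, v) \<in> ?R ^^ k" using conn r that by (simp add: rtrancl_power)
    then show ?thesis unfolding dist_def by (rule LeastI_ex)
  qed
  have par_ex: "\<exists>u. (r, u) \<in> ?R ^^ (dist v - 1) \<and> (u, v) \<in> ?R"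
    and dist_pos: "dist v \<noteq> 0" if v: "v \<in> carrier G" "v \<noteq> r" for v
  proof -
    show "dist v \<noteq> 0" using dist[OF v(1)] v(2) by (metis relpow_0_E)
    then obtain m where "dist v = Suc m" by (cases "dist v") auto
    then show "\<exists>u. (r, u) \<in> ?R ^^ (dist v - 1) \<and> (u, v) \<in> ?R" using dist[OF v(1)] by auto
  qed
  define par where "par v = (SOME u. (r, u) \<in> ?R ^^ (dist v - 1) \<and> (u, v) \<in> ?R)" for v
  have par: "(r, par v) \<in> ?R ^^ (dist v - 1) \<and> (par v, v) \<in> ?R" if "v \<in> carrier G" "v \<noteq> r" for v
    unfolding par_def using par_ex[OF that] by (rule someI_ex)
  have dist_par: "dist (par v) < dist v" if v: "v \<in> carrier G" "v \<noteq> r" for v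
  proof -
    have "dist (par v) \<le> dist v - 1"
      unfolding dist_def[of "par v"] by (rule Least_le) (use par[OF v] in simp)
    then show ?thesis using dist_pos[OF v] by simp
  qed
  have "inj_on (\<lambda>v. {par v, v}) (carrier G - {r})"
  proof (rule inj_onI)
    fix v w assume v: "v \<in> carrier G - {r}" and w: "w \<in> carrier G - {r}"
      and eq: "{par v, v} = {par w, w}"
    show "v = w"
    proof (rule ccontr)
      assume "v \<noteq> w"
      then have "par v = w" "par w = v" using eq by (auto simp: doubleton_eq_iff)
      then show False using dist_par[of v] dist_par[of w] v w by auto
    qed
  qed
  moreover have "(\<lambda>v. {par v, v}) ` (carrier G - {r}) \<subseteq> T"
    using par unfolding adj_rel_def by auto
  moreover have "finite T" using T finite_Kedges[OF fin] by (rule finite_subset)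
  ultimately have "card (carrier G - {r}) \<le> card T" by (rule card_inj_on_le)
  then show ?thesis using r fin by simp
qed simp

lemma cycle_closing_edge_bypassed:
  assumes len: "length vs \<ge> 3" and dist: "distinct vs"
    and path: "\<forall>i < length vs - 1. {vs ! i, vs ! (i + 1)} \<in> T"
  shows "(hd vs, last vs) \<in> (adj_rel (T - {{last vs, hd vs}}))\<^sup>*"
proof -
  define k where "k = length vs"
  have "vs \<noteq> []" using len by auto
  then have last: "last vs = vs ! (k - 1)" and hd: "hd vs = vs ! 0"
    by (simp_all add: k_def last_conv_nth hd_conv_nth)
  have idx_eq: "vs ! a = vs ! b \<Longrightarrow> a < k \<Longrightarrow> b < k \<Longrightarrow> a = b" for a b
    using nth_eq_iff_index_eq[OF dist] by (simp add: k_def)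
  have "(hd vs, vs ! i) \<in> (adj_rel (T - {{last vs, hd vs}}))\<^sup>*" if "i < k" for i
    using that
  proof (induction i)
    case (Suc i)
    have "{vs ! i, vs ! Suc i} \<in> T" using path Suc.prems by (simp add: k_def)
    moreover have "vs ! i \<noteq> vs ! Suc i" using idx_eq[of i "Suc i"] Suc.prems by auto
    moreover have "{vs ! i, vs ! Suc i} \<noteq> {vs ! (k - 1), vs ! 0}"
    proof
      assume "{vs ! i, vs ! Suc i} = {vs ! (k - 1), vs ! 0}"
      then have "vs ! i = vs ! (k - 1) \<or> vs ! i = vs ! 0 \<and> vs ! Suc i = vs ! (k - 1)"
        by (auto simp: doubleton_eq_iff)
      then have "i = k - 1 \<or> i = 0 \<and> Suc i = k - 1"
        using idx_eq[of i "k - 1"] idx_eq[of i 0] idx_eq[of "Suc i" "k - 1"] Suc.prems by linarith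
      then show False using Suc.prems len unfolding k_def by linarith
    qed
    ultimately have "(vs ! i, vs ! Suc i) \<in> adj_rel (T - {{last vs, hd vs}})"
      unfolding adj_rel_def last hd by auto
    with Suc show ?case by (meson Suc_lessD rtrancl.rtrancl_into_rtrancl)
  qed (simp add: hd)
  from this[of "k - 1"] show ?thesis using len by (simp add: k_def last)
qed

lemma spanning_connected_remove_cycle_edge:
  assumes sc: "spanning_connected G T" and cyc: "has_cycle T"
  shows "\<exists>e\<in>T. spanning_connected G (T - {e})"
proof -
  obtain vs where vs: "length vs \<ge> 3" "distinct vs" "\<forall>i < length vs - 1. {vs ! i, vs ! (i + 1)} \<in> T"
    "{last vs, hd vs} \<in> T" using cyc unfolding has_cycle_def by auto
  let ?T' = "T - {{last vs, hd vs}}"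
  have bypass: "(hd vs, last vs) \<in> (adj_rel ?T')\<^sup>*"
    using vs(1-3) by (rule cycle_closing_edge_bypassed)
  have "adj_rel T \<subseteq> (adj_rel ?T')\<^sup>*"
  proof (clarify)
    fix a b assume ab: "(a, b) \<in> adj_rel T"
    show "(a, b) \<in> (adj_rel ?T')\<^sup>*"
    proof (cases "{a, b} = {last vs, hd vs}")
      case True
      then have "(a, b) = (last vs, hd vs) \<or> (a, b) = (hd vs, last vs)"
        by (auto simp: doubleton_eq_iff)
      then show ?thesis using bypass rtrancl_adj_rel_sym[OF bypass] by auto
    next
      case False
      with ab have "(a, b) \<in> adj_rel ?T'" unfolding adj_rel_def by auto
      then show ?thesis by (rule r_into_rtrancl)
    qed
  qed
  then have "(adj_rel T)\<^sup>* \<subseteq> (adj_rel ?T')\<^sup>*" by (rule rtrancl_subset_rtrancl)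
  with sc have "spanning_connected G ?T'" unfolding spanning_connected_def by auto
  with vs(4) show ?thesis by blast
qed

lemma spanning_tree_if_card:
  assumes fin: "finite (carrier G)" and sc: "spanning_connected G T"
    and card: "card T + 1 = card (carrier G)"
  shows "spanning_tree G T"
  unfolding spanning_tree_def
proof (intro conjI notI sc)
  assume "has_cycle T"
  then obtain e where e: "e \<in> T" and "spanning_connected G (T - {e})"
    using spanning_connected_remove_cycle_edge[OF sc] by blast
  then have "card (carrier G) \<le> card (T - {e}) + 1"
    using card_carrier_le_if_spanning_connected[OF fin] by blast
  moreover have "finite T"
    using sc finite_Kedges[OF fin] unfolding spanning_connected_def by (auto intro: finite_subset)
  moreover have "card T > 0" using \<open>finite T\<close> e by (auto simp: card_gt_0_iff)
  ultimately show False using card e by (simp add: card_Diff_singleton)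
qed

text \<open>Each of the \<open>n\<close> subgraphs has at least \<open>2n - 1\<close> edges and \<open>K\<^sub>2\<^sub>n\<close> has only
  \<open>n (2n - 1)\<close> edges, so each has exactly \<open>2n - 1\<close> edges and together they cover all edges.\<close>
lemma complete_rainbow_set_by_counting:
  assumes fin: "finite (carrier G)" and card_V: "card (carrier G) = 2 * n"
    and card_TT: "card TT = n"
    and disj: "\<forall>T1\<in>TT. \<forall>T2\<in>TT. T1 \<noteq> T2 \<longrightarrow> T1 \<inter> T2 = {}"
    and conn: "\<forall>T\<in>TT. spanning_connected G T"
    and rainbow: "\<forall>T\<in>TT. \<forall>F\<in>FF. card (T \<inter> F) = 1"
  shows "complete_rainbow_set G FF TT"
proof -
  have sub: "T \<subseteq> Kedges G" if "T \<in> TT" for T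
    using conn that unfolding spanning_connected_def by blast
  have finK: "finite (Kedges G)" using fin by (rule finite_Kedges)
  have finT: "finite T" if "T \<in> TT" for T using finite_subset[OF sub[OF that] finK] .
  have finTT: "finite TT" using finite_subset[of TT "Pow (Kedges G)"] sub finK by blast
  have lower: "2 * n - 1 \<le> card T" if "T \<in> TT" for T
    using card_carrier_le_if_spanning_connected[OF fin] conn that card_V by fastforce
  have union: "card (\<Union>TT) = (\<Sum>T\<in>TT. card T)"
    by (rule card_Union_disjoint) (use disj finT in \<open>auto simp: pairwise_def disjnt_def\<close>)
  have "card (\<Union>TT) \<le> card (Kedges G)"
    using sub finK by (intro card_mono) auto
  also have "card (Kedges G) = (\<Sum>T\<in>TT. 2 * n - 1)"
    using card_Kedges[OF fin] card_V card_TT by (simp add: choose_two)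
  finally have sum_le: "(\<Sum>T\<in>TT. card T) \<le> (\<Sum>T\<in>TT. 2 * n - 1)" using union by simp
  have exact: "card T = 2 * n - 1" if "T \<in> TT" for T
  proof (rule ccontr)
    assume "card T \<noteq> 2 * n - 1"
    with lower that have "(\<Sum>T\<in>TT. 2 * n - 1) < (\<Sum>T\<in>TT. card T)"
      by (intro sum_strict_mono_ex1[OF finTT]) (auto intro!: bexI[of _ T] simp: le_neq_implies_less)
    with sum_le show False by simp
  qed
  then have "card (\<Union>TT) = card (Kedges G)"
    using union card_Kedges[OF fin] card_V card_TT by (simp add: choose_two)
  then have cover: "\<Union>TT = Kedges G"
    using sub finK by (intro card_subset_eq) auto
  have "spanning_tree G T" if T: "T \<in> TT" for T
  proof (rule spanning_tree_if_card[OF fin])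
    show "spanning_connected G T" using conn T by blast
    have "n > 0" using card_TT finTT T by (auto simp: card_gt_0_iff)
    then show "card T + 1 = card (carrier G)" using exact[OF T] card_V by simp
  qed
  with cover disj rainbow show ?thesis
    unfolding complete_rainbow_set_def rainbow_spanning_tree_def by blast
qed

section \<open>Starters and their 1-factorizations\<close>

locale starter_factorization = group G for G :: "('a, 'b) monoid_scheme" (structure) +
  fixes r :: nat and S :: "nat \<Rightarrow> 'a set set" and Hs :: "nat \<Rightarrow> 'a set"
  assumes finite_carrier: "finite (carrier G)" and starter: "starter G r S Hs"
begin

definition diff_set :: "nat \<Rightarrow> 'a set" where
  "diff_set i = set_mset (dS G (S i))"

lemma S_Kedges: "i \<in> {1..r} \<Longrightarrow> S i \<subseteq> Kedges G"
  using starter unfolding starter_def by blast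

lemma Hs_subgroup: "i \<in> {1..r} \<Longrightarrow> subgroup (Hs i) G"
  using starter unfolding starter_def by blast

lemma set_mset_dS: "T \<subseteq> Kedges G \<Longrightarrow> set_mset (dS G T) = (\<Union>f\<in>T. diffs G f)"
  using finite_subset[OF _ finite_Kedges[OF finite_carrier]] finite_diffs
  unfolding dS_def by (auto simp: set_mset_sum subset_iff)

lemma count_dS_sum_le_one: "(\<Sum>i\<in>{1..r}. count (dS G (S i)) x) \<le> 1"
proof -
  have "(\<Sum>i\<in>{1..r}. count (dS G (S i)) x) = count (mset_set (carrier G - {\<one>})) x"
    using starter unfolding starter_def by (simp add: count_sum[symmetric])
  then show ?thesis by (simp add: count_mset_set')
qed

lemma count_dS_le_one: "i \<in> {1..r} \<Longrightarrow> count (dS G (S i)) x \<le> 1"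
  using member_le_sum[of i "{1..r}" "\<lambda>i. count (dS G (S i)) x"] count_dS_sum_le_one[of x]
  by simp

lemma diff_sets_disjoint:
  assumes "i \<in> {1..r}" "k \<in> {1..r}" "i \<noteq> k"
  shows "diff_set i \<inter> diff_set k = {}"
proof (rule ccontr)
  assume "diff_set i \<inter> diff_set k \<noteq> {}"
  then obtain x where "count (dS G (S i)) x > 0" "count (dS G (S k)) x > 0"
    unfolding diff_set_def by auto
  moreover have "(\<Sum>a\<in>{i, k}. count (dS G (S a)) x) \<le> (\<Sum>a\<in>{1..r}. count (dS G (S a)) x)"
    by (rule sum_mono2) (use assms in auto)
  then have "count (dS G (S i)) x + count (dS G (S k)) x \<le> 1"
    using count_dS_sum_le_one[of x] assms(3) by simp
  ultimately show False by linarith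
qed

lemma card_rcosets_Hs:
  assumes i: "i \<in> {1..r}"
  shows "card (rcosets (Hs i)) = card (diff_set i)"
proof -
  have "card (rcosets (Hs i)) = size (phiS G (S i))"
    using size_left_transversal[OF finite_carrier Hs_subgroup[OF i]] starter i
    unfolding starter_def by metis
  also have "\<dots> = (\<Sum>f\<in>S i. card (diffs G f))"
    unfolding phiS_def size_multiset_sum
    using S_Kedges[OF i] size_phi[OF finite_carrier] by (intro sum.cong) auto
  also have "\<dots> = size (dS G (S i))" unfolding dS_def by simp
  also have "\<dots> = (\<Sum>x\<in>diff_set i. count (dS G (S i)) x)"
    unfolding diff_set_def by (rule size_multiset_overloaded_eq)
  also have "\<dots> = (\<Sum>x\<in>diff_set i. 1)"
  proof (intro sum.cong refl)
    fix x assume "x \<in> diff_set i"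
    then have "count (dS G (S i)) x > 0" unfolding diff_set_def by simp
    with count_dS_le_one[OF i, of x] show "count (dS G (S i)) x = 1" by linarith
  qed
  finally show ?thesis by simp
qed

lemma base_factor_Kedges: "i \<in> {1..r} \<Longrightarrow> base_factor G S Hs i \<subseteq> Kedges G"
  unfolding base_factor_def Orb_def
  using S_Kedges subgroup.subset[OF Hs_subgroup] edge_act_closed by blast

lemma factor_orbit_edge:
  assumes i: "i \<in> {1..r}" and F: "F \<in> factor_orbit G S Hs i" and f: "f \<in> F"
  shows "f \<in> Kedges G \<and> diffs G f \<subseteq> diff_set i"
proof -
  obtain g f0 h where g: "g \<in> carrier G" and f0: "f0 \<in> S i" and h: "h \<in> Hs i"
    and f_eq: "f = edge_act G (edge_act G f0 h) g"
    using F f unfolding factor_orbit_def edges_act_def base_factor_def Orb_def by auto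
  have "f0 \<in> Kedges G" using f0 S_Kedges[OF i] by blast
  moreover have "h \<in> carrier G" using h subgroup.subset[OF Hs_subgroup[OF i]] by blast
  ultimately have "f \<in> Kedges G" and "diffs G f = diffs G f0"
    using g by (simp_all add: f_eq edge_act_closed diffs_edge_act)
  moreover have "diffs G f0 \<subseteq> diff_set i"
    unfolding diff_set_def using set_mset_dS[OF S_Kedges[OF i]] f0 by auto
  ultimately show ?thesis by simp
qed

lemma assoc_factorization_translate:
  assumes F: "F \<in> assoc_factorization G r S Hs" and g: "g \<in> carrier G"
  shows "\<exists>F'\<in>assoc_factorization G r S Hs. F' \<subseteq> Kedges G \<and> F = edges_act G F' g"
proof -
  obtain i g0 where i: "i \<in> {1..r}" and g0: "g0 \<in> carrier G"
    and F_eq: "F = edges_act G (base_factor G S Hs i) g0"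
    using F unfolding assoc_factorization_def factor_orbit_def by auto
  define F' where "F' = edges_act G (base_factor G S Hs i) (g0 \<otimes> inv g)"
  have "F' \<in> assoc_factorization G r S Hs"
    unfolding assoc_factorization_def factor_orbit_def F'_def using i g0 g by blast
  moreover have "F' \<subseteq> Kedges G"
    unfolding F'_def using base_factor_Kedges[OF i] g0 g by (simp add: edges_act_closed)
  moreover have "edges_act G F' g = F"
    unfolding F'_def F_eq using base_factor_Kedges[OF i] g0 g by (simp add: edges_act_mult m_assoc)
  ultimately show ?thesis by blast
qed

lemma factor_orbit_single_short_edge:
  assumes i: "i \<in> {1..r}" and Si: "S i = {e}" and e: "short_edge G e"
  shows "factor_orbit G S Hs i = {Orb G (carrier G) e}"
proof -
  have eK: "e \<in> Kedges G" using S_Kedges[OF i] Si by blast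
  have "card (rcosets (Hs i)) = 1"
    using card_rcosets_Hs[OF i] short_edge_iff_card_diffs[OF finite_carrier eK] e
    unfolding diff_set_def Si by (simp add: set_mset_dS[of "{e}"] eK)
  then have "card (Hs i) = card (carrier G)"
    using lagrange[OF Hs_subgroup[OF i]] unfolding order_def by simp
  then have Hs_i: "Hs i = carrier G"
    using subgroup.subset[OF Hs_subgroup[OF i]] finite_carrier by (intro card_subset_eq)
  have e_sub: "e \<subseteq> carrier G" using eK unfolding Kedges_def by blast
  show ?thesis
    unfolding factor_orbit_def base_factor_def Si Hs_i
    using Orb_carrier_edges_act[OF e_sub] by auto
qed

end

section \<open>The trees \<open>T\<^sub>1 h\<close> and \<open>T\<^sub>2 h\<close>\<close>

locale rainbow_construction = starter_factorization G r S Hs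
  for G :: "('a, 'b) monoid_scheme" (structure) and r S Hs +
  fixes n :: nat and H :: "'a set" and j :: 'a and hs :: "'a set"
    and e e1 e2 :: "'a set" and Rs :: "nat \<Rightarrow> 'a set set"
  assumes order_eq: "order G = 2 * n"
    and H_subgroup: "subgroup H G" and H_index: "card (rcosets H) = 2"
    and j_in_H: "j \<in> H" and j_ne_one: "j \<noteq> \<one>" and j_involution: "j \<otimes> j = \<one>"
    and j_unique: "\<forall>x\<in>H. x \<noteq> \<one> \<and> x \<otimes> x = \<one> \<longrightarrow> x = j"
    and hs_subset: "hs \<subseteq> H" and hs_reps: "\<forall>h\<in>H. card (hs \<inter> (h <# {\<one>, j})) = 1"
    and S_1: "S 1 = {e}" and diffs_e: "diffs G e = {j}"
    and Rs_subset: "i \<in> {2..r} \<Longrightarrow> Rs i \<subseteq> \<Union>(factor_orbit G S Hs i)"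
    and card_Rs_rcosets: "i \<in> {2..r} \<Longrightarrow> card (Rs i) = card (rcosets (Hs i))"
    and Rs_rainbow: "i \<in> {2..r} \<Longrightarrow> F \<in> factor_orbit G S Hs i \<Longrightarrow> card (Rs i \<inter> F) = 1"
    and Rs_diffs: "i \<in> {2..r} \<Longrightarrow> set_mset (dS G (Rs i)) = set_mset (dS G (S i))"
    and Rs_long: "i \<in> {2..r} \<Longrightarrow> l \<in> Rs i \<Longrightarrow> long_edge G l \<Longrightarrow>
      \<exists>!l'. l' \<in> Rs i \<and> diffs G l = diffs G l' \<and> l' \<notin> Orb G H l"
    and Rs_short: "i \<in> {2..r} \<Longrightarrow> l \<in> Rs i \<Longrightarrow> short_edge G l \<Longrightarrow>
      l' \<in> Rs i \<Longrightarrow> diffs G l' = diffs G l \<Longrightarrow> l' = l"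
    and e1_e2: "e1 \<in> Orb G (carrier G) e" "e2 \<in> Orb G (carrier G) e" "e1 \<noteq> e2"
      "Orb G H e1 \<inter> Orb G H e2 = {}"
    and connected_e1: "spanning_connected G ((\<Union>i\<in>{2..r}. Rs i) \<union> {e1})"
    and connected_e2: "spanning_connected G ((\<Union>i\<in>{2..r}. Rs i) \<union> {e2})"
begin

definition R :: "'a set set" where
  "R = (\<Union>i\<in>{2..r}. Rs i)"

lemma H_carrier: "H \<subseteq> carrier G"
  using H_subgroup by (rule subgroup.subset)

lemma j_carrier: "j \<in> carrier G"
  using j_in_H H_carrier by blast

lemma j_central: "g \<in> carrier G \<Longrightarrow> j \<otimes> g = g \<otimes> j"
  using unique_involution_central[OF index_two_normal[OF H_subgroup H_index]]
    j_in_H j_ne_one j_involution j_unique by blast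

lemma j_mult_j: "y \<in> carrier G \<Longrightarrow> j \<otimes> (j \<otimes> y) = y"
  using j_carrier j_involution by (simp add: m_assoc[symmetric])

lemma one_in_index: "1 \<in> {1..r}"
proof (rule ccontr)
  assume "1 \<notin> {1..r}"
  then have "mset_set (carrier G - {\<one>}) = {#}" using starter unfolding starter_def by simp
  then have "carrier G - {\<one>} = {}" using finite_carrier by (simp add: mset_set_empty_iff)
  then show False using j_carrier j_ne_one by blast
qed

lemma e_Kedges: "e \<in> Kedges G"
  using S_Kedges[OF one_in_index] S_1 by blast

lemma diff_set_1: "diff_set 1 = {j}"
  unfolding diff_set_def S_1 using set_mset_dS[of "{e}"] e_Kedges diffs_e by simp

lemma j_notin_diff_set: "i \<in> {2..r} \<Longrightarrow> j \<notin> diff_set i"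
  using diff_sets_disjoint[of 1 i] diff_set_1 one_in_index by auto

lemma factor_orbit_1: "factor_orbit G S Hs 1 = {Orb G (carrier G) e}"
  using factor_orbit_single_short_edge[OF one_in_index S_1]
    short_edge_iff_card_diffs[OF finite_carrier e_Kedges] diffs_e by simp

lemma Rs_edge:
  assumes "i \<in> {2..r}" and "l \<in> Rs i"
  shows "l \<in> Kedges G" and "diffs G l \<subseteq> diff_set i"
  using assms factor_orbit_edge[of i] Rs_subset[of i] by fastforce+

lemma R_Kedges: "R \<subseteq> Kedges G"
  unfolding R_def using Rs_edge by blast

lemma j_notin_diffs_R: "x \<in> R \<Longrightarrow> j \<notin> diffs G x"
  unfolding R_def using Rs_edge j_notin_diff_set by blast

lemma Orb_e_edge: "f \<in> Orb G (carrier G) e \<Longrightarrow> f \<in> Kedges G \<and> diffs G f = {j}"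
  unfolding Orb_def using e_Kedges edge_act_closed diffs_edge_act diffs_e by auto

lemma e1_e2_edges: "a \<in> {e1, e2} \<Longrightarrow> a \<in> Kedges G \<and> diffs G a = {j}"
  using Orb_e_edge e1_e2 by auto

text \<open>Since \<open>j\<close> is central, the edges with difference \<open>j\<close> are exactly the \<open>{y, y j}\<close>.\<close>
lemma j_edge_fixed_iff:
  assumes f: "f \<in> Kedges G" "diffs G f = {j}" and c: "c \<in> carrier G"
  shows "edge_act G f c = f \<longleftrightarrow> c = \<one> \<or> c = j"
proof -
  obtain y where y: "y \<in> carrier G" "f = {y \<otimes> j, y}"
    using Kedges_eq_by_diff[OF f(1)] f(2) j_central by auto
  have act: "edge_act G f c = {y \<otimes> j \<otimes> c, y \<otimes> c}" using y by (simp add: edge_act_pair)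
  show ?thesis
  proof
    assume "edge_act G f c = f"
    then have "y \<otimes> c = y \<otimes> \<one> \<or> y \<otimes> c = y \<otimes> j"
      unfolding act using y(1) by (simp add: y(2) doubleton_eq_iff) blast
    then show "c = \<one> \<or> c = j" using y(1) c j_carrier by simp
  next
    assume "c = \<one> \<or> c = j"
    then show "edge_act G f c = f"
      unfolding act using y j_carrier j_involution by (auto simp: m_assoc)
  qed
qed

lemma Rs_stabiliser_trivial:
  assumes i: "i \<in> {2..r}" and l: "l \<in> Rs i" and c: "c \<in> H" and fixed: "edge_act G l c = l"
  shows "c = \<one>"
proof (rule ccontr)
  assume c1: "c \<noteq> \<one>"
  have cc: "c \<in> carrier G" using c H_carrier by blast
  obtain x y where xy: "x \<in> carrier G" "y \<in> carrier G" "x \<noteq> y" "l = {x, y}"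
    using Rs_edge(1)[OF i l] unfolding Kedges_iff by auto
  have "x \<otimes> c \<noteq> x" using c1 cc xy by simp
  with fixed xy have xc: "x \<otimes> c = y" and yc: "y \<otimes> c = x"
    by (auto simp: edge_act_pair doubleton_eq_iff)
  have "x \<otimes> (c \<otimes> c) = x \<otimes> \<one>" using xc yc cc xy by (simp add: m_assoc[symmetric])
  then have "c \<otimes> c = \<one>" using xy cc by simp
  then have "c = j" using j_unique c c1 by blast
  then have "y = j \<otimes> x" using xc xy(1) j_central by simp
  then have "y \<otimes> inv x = j" using xy(1) j_carrier by (simp add: m_assoc)
  moreover have "y \<otimes> inv x \<in> diffs G l" using xy by (simp add: diffs_pair)
  ultimately show False using j_notin_diff_set[OF i] Rs_edge(2)[OF i l] by auto
qed

lemma card_Rs: "i \<in> {2..r} \<Longrightarrow> card (Rs i) = card (diff_set i)"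
  using card_Rs_rcosets card_rcosets_Hs[of i] by simp

lemma finite_Rs: "i \<in> {2..r} \<Longrightarrow> finite (Rs i)"
  using finite_subset[OF _ finite_Kedges[OF finite_carrier]] Rs_edge(1) by blast

lemma self_in_H_orbit: "f \<in> Kedges G \<Longrightarrow> f \<in> Orb G H f"
  unfolding Orb_def Kedges_def
  using edge_act_one subgroup.one_closed[OF H_subgroup]
  by (metis (no_types, lifting) image_iff mem_Collect_eq)

lemma card_diffs_le_fibre:
  assumes i: "i \<in> {2..r}" and l: "l \<in> Rs i"
  shows "card (diffs G l) \<le> card {f \<in> Rs i. diffs G f = diffs G l}"
proof -
  have lK: "l \<in> Kedges G" using Rs_edge(1)[OF i l] .
  have fin: "finite {f \<in> Rs i. diffs G f = diffs G l}" using finite_Rs[OF i] by simp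
  have "l \<in> {f \<in> Rs i. diffs G f = diffs G l}" using l by simp
  then have pos: "card {f \<in> Rs i. diffs G f = diffs G l} \<ge> 1"
    using fin by (simp add: Suc_le_eq card_gt_0_iff) blast
  show ?thesis
  proof (cases "long_edge G l")
    case True
    then obtain l' where l': "l' \<in> Rs i" "diffs G l' = diffs G l" "l' \<notin> Orb G H l"
      using Rs_long[OF i l] by metis
    then have "l' \<noteq> l" using self_in_H_orbit[OF lK] by blast
    then have "card {l, l'} = 2" by simp
    moreover have "{l, l'} \<subseteq> {f \<in> Rs i. diffs G f = diffs G l}" using l l' by auto
    ultimately have "2 \<le> card {f \<in> Rs i. diffs G f = diffs G l}" by (metis card_mono fin)
    then show ?thesis using True long_edge_iff_card_diffs[OF finite_carrier lK] by simp
  next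
    case False
    then have "card (diffs G l) = 1"
      using long_or_short_edge[OF finite_carrier lK] short_edge_iff_card_diffs[OF finite_carrier lK]
      by blast
    then show ?thesis using pos by simp
  qed
qed

text \<open>Equality holds because both sides sum to \<open>card (Rs i) = card (diff_set i)\<close>.\<close>
lemma card_fibre_eq_card_diffs:
  assumes i: "i \<in> {2..r}" and l: "l \<in> Rs i"
  shows "card {f \<in> Rs i. diffs G f = diffs G l} = card (diffs G l)"
proof (rule ccontr)
  let ?fibre = "\<lambda>d. {f \<in> Rs i. diffs G f = d}"
  let ?D = "(\<lambda>f. diffs G f) ` Rs i"
  assume "card (?fibre (diffs G l)) \<noteq> card (diffs G l)"
  then have lt: "card (diffs G l) < card (?fibre (diffs G l))"
    using card_diffs_le_fibre[OF i l] by simp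
  have finR: "finite (Rs i)" using finite_Rs[OF i] .
  have "diff_set i = \<Union>?D"
    unfolding diff_set_def Rs_diffs[OF i, symmetric] using Rs_edge(1)[OF i]
    by (subst set_mset_dS) auto
  then have "card (diff_set i) \<le> (\<Sum>d\<in>?D. card d)"
    by (simp add: card_Union_le_sum_card)
  also have "\<dots> < (\<Sum>d\<in>?D. card (?fibre d))"
  proof (rule sum_strict_mono_ex1)
    show "\<forall>d\<in>?D. card d \<le> card (?fibre d)" using card_diffs_le_fibre[OF i] by blast
    show "\<exists>d\<in>?D. card d < card (?fibre d)" using lt l by blast
  qed (use finR in simp)
  also have "\<dots> = (\<Sum>d\<in>?D. \<Sum>f\<in>?fibre d. 1)" by simp
  also have "\<dots> = card (Rs i)" using finR by (subst sum.group) auto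
  finally show False using card_Rs[OF i] by simp
qed

lemma Rs_H_orbit_unique:
  assumes i: "i \<in> {2..r}" and l: "l \<in> Rs i" and m: "m \<in> Rs i" and c: "c \<in> H"
    and m_eq: "m = edge_act G l c"
  shows "m = l"
proof (rule ccontr)
  assume ml: "m \<noteq> l"
  have lK: "l \<in> Kedges G" using Rs_edge(1)[OF i l] .
  have dm: "diffs G m = diffs G l" using m_eq lK c H_carrier diffs_edge_act by auto
  show False
  proof (cases "long_edge G l")
    case True
    then obtain l' where l': "l' \<in> Rs i" "diffs G l' = diffs G l" "l' \<notin> Orb G H l"
      using Rs_long[OF i l] by metis
    have "m \<in> Orb G H l" unfolding Orb_def m_eq using c by blast
    then have "l' \<noteq> l" "l' \<noteq> m" using l'(3) self_in_H_orbit[OF lK] by auto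
    then have "card {l, m, l'} = 3" using ml by simp
    moreover have "{l, m, l'} \<subseteq> {f \<in> Rs i. diffs G f = diffs G l}" using l m l' dm by auto
    moreover have "finite {f \<in> Rs i. diffs G f = diffs G l}" using finite_Rs[OF i] by simp
    ultimately have "3 \<le> card {f \<in> Rs i. diffs G f = diffs G l}" by (metis card_mono)
    then show False
      using card_fibre_eq_card_diffs[OF i l] True long_edge_iff_card_diffs[OF finite_carrier lK]
      by simp
  next
    case False
    then have "short_edge G l" using long_or_short_edge[OF finite_carrier lK] by blast
    then show False using Rs_short[OF i l _ m dm] ml by blast
  qed
qed

lemma R_H_translate:
  assumes x: "x \<in> R" and y: "y \<in> R" and c: "c \<in> H" and y_eq: "y = edge_act G x c"
  shows "c = \<one>"
proof -
  obtain i k where i: "i \<in> {2..r}" "x \<in> Rs i" and k: "k \<in> {2..r}" "y \<in> Rs k"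
    using x y unfolding R_def by blast
  have "diffs G y = diffs G x"
    using y_eq Rs_edge(1)[OF i] c H_carrier diffs_edge_act by auto
  then have "diffs G x \<subseteq> diff_set i \<inter> diff_set k"
    using Rs_edge(2)[OF i] Rs_edge(2)[OF k] by auto
  moreover have "diffs G x \<noteq> {}" using diffs_nonempty Rs_edge(1)[OF i] by blast
  ultimately have "i = k" using diff_sets_disjoint[of i k] i(1) k(1) by auto
  then have "y = x" using Rs_H_orbit_unique[OF i _ c y_eq] k by simp
  then show ?thesis using Rs_stabiliser_trivial[OF i c] y_eq by simp
qed

lemma e1_e2_H_translate:
  assumes a: "a \<in> {e1, e2}" and b: "b \<in> {e1, e2}" and c: "c \<in> H" and b_eq: "b = edge_act G a c"
  shows "a = b \<and> (c = \<one> \<or> c = j)"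
proof -
  have "b \<in> Orb G H a" unfolding Orb_def b_eq using c by blast
  moreover have "b \<in> Orb G H b" using self_in_H_orbit e1_e2_edges[OF b] by blast
  ultimately have "a = b" using a b e1_e2(4) by auto
  then show ?thesis using j_edge_fixed_iff e1_e2_edges[OF a] c H_carrier b_eq by blast
qed

definition tree :: "'a set \<Rightarrow> 'a \<Rightarrow> 'a set set" where
  "tree a g = edges_act G (R \<union> {a}) g"

lemma R_Un_Kedges: "a \<in> {e1, e2} \<Longrightarrow> R \<union> {a} \<subseteq> Kedges G"
  using R_Kedges e1_e2_edges by blast

lemma trees_meet:
  assumes a: "a \<in> {e1, e2}" and b: "b \<in> {e1, e2}" and g: "g \<in> H" and g': "g' \<in> H"
    and f: "f \<in> tree a g" "f \<in> tree b g'"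
  shows "g = g' \<or> (a = b \<and> g = j \<otimes> g')"
proof -
  have gc: "g \<in> carrier G" and g'c: "g' \<in> carrier G" using g g' H_carrier by auto
  obtain x y where x: "x \<in> R \<union> {a}" "f = edge_act G x g" and y: "y \<in> R \<union> {b}" "f = edge_act G y g'"
    using f unfolding tree_def edges_act_def by auto
  have xc: "x \<subseteq> carrier G" and yc: "y \<subseteq> carrier G"
    using x(1) y(1) R_Un_Kedges[OF a] R_Un_Kedges[OF b] unfolding Kedges_def by auto
  define c where "c = g \<otimes> inv g'"
  have c: "c \<in> H" unfolding c_def using g g' H_subgroup
    by (simp add: subgroup.m_closed subgroup.m_inv_closed)
  have g_eq: "g = c \<otimes> g'" unfolding c_def using gc g'c by (simp add: m_assoc)
  have "y = edge_act G f (inv g')" using y yc g'c by (simp add: edge_act_mult edge_act_one)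
  also have "\<dots> = edge_act G x c" unfolding c_def using x xc gc g'c by (simp add: edge_act_mult)
  finally have y_eq: "y = edge_act G x c" .
  have "diffs G y = diffs G x"
    using y_eq x(1) R_Un_Kedges[OF a] c H_carrier diffs_edge_act by blast
  then have "x \<in> R \<longleftrightarrow> y \<in> R"
    using x(1) y(1) e1_e2_edges[OF a] e1_e2_edges[OF b] j_notin_diffs_R by auto
  then consider "x \<in> R" "y \<in> R" | "x = a" "y = b" using x(1) y(1) by blast
  then show ?thesis
  proof cases
    case 1
    then show ?thesis using R_H_translate[OF _ _ c y_eq] g_eq g'c by simp
  next
    case 2
    then show ?thesis using e1_e2_H_translate[OF a b c] y_eq g_eq g'c by auto
  qed
qed

lemma hs_carrier: "hs \<subseteq> carrier G"
  using hs_subset H_carrier by blast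

lemma finite_hs: "finite hs"
  using finite_subset[OF hs_carrier finite_carrier] .

lemma l_coset_one_j: "h \<in> carrier G \<Longrightarrow> h <# {\<one>, j} = {h, h \<otimes> j}"
  unfolding l_coset_def by auto

lemma hs_j_translate_disjoint: "hs \<inter> (\<lambda>h. j \<otimes> h) ` hs = {}"
proof (rule ccontr)
  assume "hs \<inter> (\<lambda>h. j \<otimes> h) ` hs \<noteq> {}"
  then obtain h where h: "h \<in> hs" "j \<otimes> h \<in> hs" by blast
  then have hc: "h \<in> carrier G" using hs_carrier by blast
  have "j \<otimes> h \<noteq> h" using hc j_carrier j_ne_one by simp
  then have "card {h, j \<otimes> h} = 2" by simp
  moreover have "{h, j \<otimes> h} \<subseteq> hs \<inter> (h <# {\<one>, j})"
    using h hc j_central[OF hc] by (simp add: l_coset_one_j)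
  ultimately have "2 \<le> card (hs \<inter> (h <# {\<one>, j}))" using finite_hs by (metis card_mono finite_Int)
  then show False using hs_reps h(1) hs_subset by auto
qed

lemma H_eq_hs_union: "H = hs \<union> (\<lambda>h. j \<otimes> h) ` hs"
proof
  show "hs \<union> (\<lambda>h. j \<otimes> h) ` hs \<subseteq> H"
    using hs_subset j_in_H H_subgroup by (auto intro: subgroup.m_closed)
  show "H \<subseteq> hs \<union> (\<lambda>h. j \<otimes> h) ` hs"
  proof
    fix h assume hH: "h \<in> H"
    then have hc: "h \<in> carrier G" using H_carrier by blast
    have "hs \<inter> {h, h \<otimes> j} \<noteq> {}" using hs_reps hH l_coset_one_j[OF hc] by force
    then have "h \<in> hs \<or> j \<otimes> h \<in> hs" using j_central[OF hc] by auto
    then show "h \<in> hs \<union> (\<lambda>h. j \<otimes> h) ` hs" using j_mult_j[OF hc] by force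
  qed
qed

lemma card_hs: "2 * card hs = n"
proof -
  have "card ((\<lambda>h. j \<otimes> h) ` hs) = card hs"
    using hs_carrier j_carrier by (intro card_image inj_onI) (auto simp: subset_iff)
  then have "card H = 2 * card hs"
    unfolding H_eq_hs_union using finite_hs hs_j_translate_disjoint by (simp add: card_Un_disjoint)
  moreover have "card H = n" using lagrange[OF H_subgroup] H_index order_eq by simp
  ultimately show ?thesis by simp
qed

lemma R_rainbow:
  assumes a: "a \<in> {e1, e2}" and F: "F \<in> assoc_factorization G r S Hs"
  shows "card ((R \<union> {a}) \<inter> F) = 1"
proof -
  obtain i where i: "i \<in> {1..r}" and Fi: "F \<in> factor_orbit G S Hs i"
    using F unfolding assoc_factorization_def by blast
  show ?thesis
  proof (cases "i = 1")
    case True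
    then have F_eq: "F = Orb G (carrier G) e" using Fi factor_orbit_1 by simp
    have "R \<inter> F = {}" using j_notin_diffs_R Orb_e_edge unfolding F_eq by blast
    moreover have "a \<in> F" using a e1_e2(1,2) unfolding F_eq by blast
    ultimately have "(R \<union> {a}) \<inter> F = {a}" by blast
    then show ?thesis by simp
  next
    case False
    then have i2: "i \<in> {2..r}" using i by simp
    have "x \<in> Rs i" if x: "x \<in> R \<union> {a}" "x \<in> F" for x
    proof -
      have dx: "diffs G x \<subseteq> diff_set i" and xK: "x \<in> Kedges G"
        using factor_orbit_edge[OF i Fi x(2)] by auto
      have "x \<noteq> a" using dx j_notin_diff_set[OF i2] e1_e2_edges[OF a] by auto
      then obtain k where k: "k \<in> {2..r}" "x \<in> Rs k" using x(1) unfolding R_def by blast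
      have "diffs G x \<subseteq> diff_set k \<inter> diff_set i" using Rs_edge(2)[OF k] dx by blast
      then have "k = i" using diff_sets_disjoint[of k i] diffs_nonempty[OF xK] k(1) i by auto
      then show ?thesis using k(2) by simp
    qed
    then have "(R \<union> {a}) \<inter> F = Rs i \<inter> F" using i2 unfolding R_def by blast
    then show ?thesis using Rs_rainbow[OF i2 Fi] by simp
  qed
qed

lemma tree_rainbow:
  assumes a: "a \<in> {e1, e2}" and g: "g \<in> carrier G" and F: "F \<in> assoc_factorization G r S Hs"
  shows "card (tree a g \<inter> F) = 1"
proof -
  obtain F' where F': "F' \<in> assoc_factorization G r S Hs" "F' \<subseteq> Kedges G" "F = edges_act G F' g"
    using assoc_factorization_translate[OF F g] by blast
  have "tree a g \<inter> F = edges_act G ((R \<union> {a}) \<inter> F') g"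
    unfolding tree_def F'(3) using edges_act_Int[OF R_Un_Kedges[OF a] F'(2) g] by simp
  also have "card \<dots> = card ((R \<union> {a}) \<inter> F')"
    using R_Un_Kedges[OF a] g by (intro card_edges_act) auto
  finally show ?thesis using R_rainbow[OF a F'(1)] by simp
qed

lemma tree_connected: "a \<in> {e1, e2} \<Longrightarrow> g \<in> carrier G \<Longrightarrow> spanning_connected G (tree a g)"
  unfolding tree_def R_def using connected_e1 connected_e2 spanning_connected_edges_act by auto

lemma tree_nonempty: "a \<in> {e1, e2} \<Longrightarrow> g \<in> carrier G \<Longrightarrow> tree a g \<noteq> {}"
  unfolding tree_def edges_act_def by blast

definition tree_index :: "('a set \<times> 'a) set" where
  "tree_index = {e1} \<times> hs \<union> {e2} \<times> (\<lambda>h. j \<otimes> h) ` hs"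

lemma tree_index_H: "(a, g) \<in> tree_index \<Longrightarrow> a \<in> {e1, e2} \<and> g \<in> H"
  unfolding tree_index_def using H_eq_hs_union by blast

lemma trees_disjoint:
  assumes p: "(a, g) \<in> tree_index" and q: "(b, g') \<in> tree_index" and ne: "(a, g) \<noteq> (b, g')"
  shows "tree a g \<inter> tree b g' = {}"
proof (rule ccontr)
  assume "tree a g \<inter> tree b g' \<noteq> {}"
  then have meet: "g = g' \<or> (a = b \<and> g = j \<otimes> g')"
    using trees_meet tree_index_H[OF p] tree_index_H[OF q] by blast
  have hs_iff: "(a, g) \<in> tree_index \<Longrightarrow> a = e1 \<longleftrightarrow> g \<in> hs" for a g
    using e1_e2(3) hs_j_translate_disjoint unfolding tree_index_def by blast
  from meet show False
  proof
    assume "g = g'"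
    then have "a = b"
      using hs_iff[OF p] hs_iff[OF q] tree_index_H[OF p] tree_index_H[OF q] by auto
    with \<open>g = g'\<close> ne show False by simp
  next
    assume ab: "a = b \<and> g = j \<otimes> g'"
    have g'c: "g' \<in> carrier G" using tree_index_H[OF q] H_carrier by blast
    have "g \<in> hs \<longleftrightarrow> g' \<in> hs" using hs_iff[OF p] hs_iff[OF q] ab by simp
    moreover have "g \<in> hs \<longleftrightarrow> g' \<in> (\<lambda>h. j \<otimes> h) ` hs"
    proof
      show "g \<in> hs \<Longrightarrow> g' \<in> (\<lambda>h. j \<otimes> h) ` hs" using ab j_mult_j[OF g'c] by force
      show "g' \<in> (\<lambda>h. j \<otimes> h) ` hs \<Longrightarrow> g \<in> hs" using ab hs_carrier j_mult_j by auto
    qed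
    moreover have "g' \<in> hs \<or> g' \<in> (\<lambda>h. j \<otimes> h) ` hs"
      using tree_index_H[OF q] H_eq_hs_union by blast
    ultimately show False using hs_j_translate_disjoint by blast
  qed
qed

lemma card_trees: "card ((\<lambda>(a, g). tree a g) ` tree_index) = n"
proof -
  have "inj_on (\<lambda>(a, g). tree a g) tree_index"
  proof (rule inj_onI, clarify)
    fix a g b g' assume p: "(a, g) \<in> tree_index" and q: "(b, g') \<in> tree_index"
      and eq: "tree a g = tree b g'"
    have "tree a g \<noteq> {}" using tree_index_H[OF p] H_carrier tree_nonempty by blast
    then show "a = b \<and> g = g'" using trees_disjoint[OF p q] eq by auto
  qed
  then have "card ((\<lambda>(a, g). tree a g) ` tree_index) = card tree_index" by (rule card_image)
  also have "\<dots> = card hs + card ((\<lambda>h. j \<otimes> h) ` hs)"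
    unfolding tree_index_def using e1_e2(3) finite_hs
    by (subst card_Un_disjoint) (auto simp: card_cartesian_product)
  also have "card ((\<lambda>h. j \<otimes> h) ` hs) = card hs"
    using hs_carrier j_carrier by (intro card_image inj_onI) (auto simp: subset_iff)
  finally show ?thesis using card_hs by simp
qed

lemma trees_eq:
  "(\<lambda>h. edges_act G (R \<union> {e1}) h) ` hs \<union> (\<lambda>h. edges_act G (edges_act G R j \<union> {e2}) h) ` hs
   = (\<lambda>(a, g). tree a g) ` tree_index"
proof -
  have "edge_act G e2 j = e2" using j_edge_fixed_iff e1_e2_edges[of e2] j_carrier by blast
  then have "edges_act G R j \<union> {e2} = edges_act G (R \<union> {e2}) j" unfolding edges_act_def by simp
  then have "edges_act G (edges_act G R j \<union> {e2}) h = tree e2 (j \<otimes> h)" if "h \<in> hs" for h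
    unfolding tree_def using R_Un_Kedges[of e2] j_carrier hs_carrier that
    by (simp add: edges_act_mult subset_iff)
  then have "(\<lambda>h. edges_act G (edges_act G R j \<union> {e2}) h) ` hs = (\<lambda>g. tree e2 g) ` (\<lambda>h. j \<otimes> h) ` hs"
    unfolding image_image by (rule image_cong[OF refl])
  moreover have "(\<lambda>(a, g). tree a g) ` ({a} \<times> A) = (\<lambda>g. tree a g) ` A" for a A by force
  ultimately show ?thesis unfolding tree_index_def image_Un tree_def by simp
qed

theorem complete_rainbow_set_trees:
  "complete_rainbow_set G (assoc_factorization G r S Hs)
     ((\<lambda>h. edges_act G (R \<union> {e1}) h) ` hs \<union> (\<lambda>h. edges_act G (edges_act G R j \<union> {e2}) h) ` hs)"
  unfolding trees_eq
proof (rule complete_rainbow_set_by_counting[OF finite_carrier _ card_trees]; (intro ballI impI)?)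
  show "card (carrier G) = 2 * n" using order_eq unfolding order_def .
  fix T assume "T \<in> (\<lambda>(a, g). tree a g) ` tree_index"
  then obtain a g where p: "(a, g) \<in> tree_index" and T: "T = tree a g" by force
  have a: "a \<in> {e1, e2}" and g: "g \<in> carrier G" using tree_index_H[OF p] H_carrier by auto
  show "spanning_connected G T" unfolding T using tree_connected[OF a g] .
  show "card (T \<inter> F) = 1" if "F \<in> assoc_factorization G r S Hs" for F
    unfolding T using tree_rainbow[OF a g that] .
  show "T \<inter> T' = {}" if "T' \<in> (\<lambda>(a, g). tree a g) ` tree_index" and "T \<noteq> T'" for T'
    using that trees_disjoint[OF p] unfolding T by blast
qed

end

theorem lemma1p2:
  fixes G :: "('a, 'b) monoid_scheme"
    and n r :: nat and H :: "'a set" and j :: 'a and hs :: "'a set"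
    and S :: "nat \<Rightarrow> 'a set set" and Hs :: "nat \<Rightarrow> 'a set"
    and e e1 e2 :: "'a set" and Rs :: "nat \<Rightarrow> 'a set set"
  assumes grp: "group G" and fin: "finite (carrier G)"
    and n_gt: "n > 2" and n_even: "even n" and ord: "order G = 2 * n"
    and H_sub: "subgroup H G" and H_cyc: "cyclic_group (G\<lparr>carrier := H\<rparr>)"
    and H_idx: "card (rcosets\<^bsub>G\<^esub> H) = 2"
    and j_inv: "j \<in> H" "j \<noteq> \<one>\<^bsub>G\<^esub>" "j \<otimes>\<^bsub>G\<^esub> j = \<one>\<^bsub>G\<^esub>"
    and j_unique: "\<forall>x\<in>H. x \<noteq> \<one>\<^bsub>G\<^esub> \<and> x \<otimes>\<^bsub>G\<^esub> x = \<one>\<^bsub>G\<^esub> \<longrightarrow> x = j"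
    and hs_sub: "hs \<subseteq> H"
    and hs_reps: "\<forall>h\<in>H. card (hs \<inter> (h <#\<^bsub>G\<^esub> {\<one>\<^bsub>G\<^esub>, j})) = 1"
    and st: "starter G r S Hs"
    and S1: "S 1 = {e}" and de: "diffs G e = {j}"
    and R1: "\<forall>i\<in>{2..r}. Rs i \<subseteq> \<Union>(factor_orbit G S Hs i)
              \<and> card (Rs i) = card (rcosets\<^bsub>G\<^esub> (Hs i))
              \<and> (\<forall>F\<in>factor_orbit G S Hs i. card (Rs i \<inter> F) = 1)
              \<and> set_mset (dS G (Rs i)) = set_mset (dS G (S i))"
    and R2_long: "\<forall>i\<in>{2..r}. \<forall>l\<in>Rs i. long_edge G l \<longrightarrow>
              (\<exists>!l'. l' \<in> Rs i \<and> diffs G l = diffs G l' \<and> l' \<notin> Orb G H l)"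
    and R2_short: "\<forall>i\<in>{2..r}. \<forall>l\<in>Rs i. short_edge G l \<longrightarrow>
              (\<forall>l'\<in>Rs i. diffs G l' = diffs G l \<longrightarrow> l' = l)"
    and e12: "e1 \<in> Orb G (carrier G) e" "e2 \<in> Orb G (carrier G) e" "e1 \<noteq> e2"
             "Orb G H e1 \<inter> Orb G H e2 = {}"
    and conn1: "spanning_connected G ((\<Union>i\<in>{2..r}. Rs i) \<union> {e1})"
    and conn2: "spanning_connected G ((\<Union>i\<in>{2..r}. Rs i) \<union> {e2})"
  shows "complete_rainbow_set G (assoc_factorization G r S Hs)
           ((\<lambda>h. edges_act G ((\<Union>i\<in>{2..r}. Rs i) \<union> {e1}) h) ` hs \<union>
            (\<lambda>h. edges_act G (edges_act G (\<Union>i\<in>{2..r}. Rs i) j \<union> {e2}) h) ` hs)"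
proof -
  interpret rainbow_construction G r S Hs n H j hs e e1 e2 Rs
  proof (intro rainbow_construction.intro starter_factorization.intro
      starter_factorization_axioms.intro rainbow_construction_axioms.intro)
  qed (fact assms | use R1 R2_long R2_short in blast)+
  show ?thesis using complete_rainbow_set_trees unfolding R_def .
qed

end
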